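(* Let $(A,\circ,[\cdot,\cdot])$ be a finite-dimensional dual pre-Poisson algebra and let $r\in A\otimes A$ be symmetric and nondegenerate. Let $\mathcal{B}(x,y)=\langle\tilde r^{-1}(x),y\rangle$ for $x,y\in A$. Then $r$ is a solution of the permutative-Leibniz Yang–Baxter equation if and only if, for all $x,y,z\in A$, $$\mathcal{B}(x\circ y,z)=\mathcal{B}(y,x\circ z)+\mathcal{B}(x,y\blacksquare z),\qquad \mathcal{B}([x,y],z)=-\mathcal{B}(y,[x,z])+\mathcal{B}(x,y\square z).$$
   Context: Field $\mathbb{F}$ of characteristic $0$. Dual pre-Poisson algebra: $x\circ(y\circ z)=(x\circ y)\circ z=(y\circ x)\circ z$; $[x,[y,z]]=[[x,y],z]+[y,[x,z]]$; $[x,y\circ z]=[x,y]\circ z+y\circ[x,z]$; $[x\circ y,z]=x\circ[y,z]+y\circ[x,z]$; $[x,y]\circ z=-[y,x]\circ z$. $x\blacksquare y=x\circ y-y\circ x$, $x\square y=[x,y]+[y,x]$. $\tilde r:A^*\to A$ is $\langle\tilde r(u^* ),v^*\rangle=\langle r,u^*\otimes v^*\rangle$; $r$ nondegenerate means $\tilde r$ invertible; symmetric means flip-invariant. PLYBE: for $r=\sum_i a_i\otimes b_i$, $\mathbf{P}(r)=\sum_{i,j}\big(a_i\otimes a_j\otimes b_i\circ b_j-a_i\otimes b_i\circ a_j\otimes b_j+a_i\blacksquare a_j\otimes b_j\otimes b_i\big)$, $\mathbf{L}(r)=\sum_{i,j}\big(a_i\otimes a_j\otimes[b_i,b_j]+a_i\otimes[b_i,a_j]\otimes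 b_j-a_i\square a_j\otimes b_i\otimes b_j\big)$; $r$ is a solution if $\mathbf{P}(r)=\mathbf{L}(r)=0$. *)

theory Defs
  imports "HOL-Analysis.Analysis"
begin

text \<open>A finite-dimensional vector space over a field 'k is modelled as 'k ^ 'n
  with 'n a finite index type (standard basis vectors axis i 1).  Tensors in
  A \<otimes> A are coefficient matrices 'k ^ 'n ^ 'n (r $ i $ j is the coefficient of
  e_i \<otimes> e_j); tensors in A \<otimes> A \<otimes> A are coefficient functions
  'n \<Rightarrow> 'n \<Rightarrow> 'n \<Rightarrow> 'k.  The dual space A* is identified with 'k ^ 'n via
  the dual basis.\<close>

definition bilinear_op :: "('k::field ^ 'n \<Rightarrow> 'k ^ 'n \<Rightarrow> 'k ^ 'n) \<Rightarrow> bool" where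
  "bilinear_op m \<longleftrightarrow>
     (\<forall>x y z. m (x + y) z = m x z + m y z) \<and>
     (\<forall>x y z. m x (y + z) = m x y + m x z) \<and>
     (\<forall>c x y. m (c *s x) y = c *s m x y) \<and>
     (\<forall>c x y. m x (c *s y) = c *s m x y)"

definition dual_pre_Poisson ::
  "('k::field ^ 'n \<Rightarrow> 'k ^ 'n \<Rightarrow> 'k ^ 'n) \<Rightarrow> ('k ^ 'n \<Rightarrow> 'k ^ 'n \<Rightarrow> 'k ^ 'n) \<Rightarrow> bool" where
  "dual_pre_Poisson cc br \<longleftrightarrow> bilinear_op cc \<and> bilinear_op br \<and>
     (\<forall>x y z. cc x (cc y z) = cc (cc x y) z) \<and>
     (\<forall>x y z. cc (cc x y) z = cc (cc y x) z) \<and>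
     (\<forall>x y z. br x (br y z) = br (br x y) z + br y (br x z)) \<and>
     (\<forall>x y z. br x (cc y z) = cc (br x y) z + cc y (br x z)) \<and>
     (\<forall>x y z. br (cc x y) z = cc x (br y z) + cc y (br x z)) \<and>
     (\<forall>x y z. cc (br x y) z = - cc (br y x) z)"

definition bsq :: "('v \<Rightarrow> 'v \<Rightarrow> 'v::ab_group_add) \<Rightarrow> 'v \<Rightarrow> 'v \<Rightarrow> 'v" where
  "bsq cc x y = cc x y - cc y x"

definition wsq :: "('v \<Rightarrow> 'v \<Rightarrow> 'v::ab_group_add) \<Rightarrow> 'v \<Rightarrow> 'v \<Rightarrow> 'v" where
  "wsq br x y = br x y + br y x"

definition pairing :: "'k::comm_ring_1 ^ 'n \<Rightarrow> 'k ^ 'n \<Rightarrow> 'k" where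
  "pairing u x = (\<Sum>i\<in>UNIV. u $ i * x $ i)"

text \<open>\<langle>r~(u*), v*\<rangle> = \<langle>r, u* \<otimes> v*\<rangle>\<close>
definition rtilde :: "'k::comm_ring_1 ^ 'n ^ 'n \<Rightarrow> 'k ^ 'n \<Rightarrow> 'k ^ 'n" where
  "rtilde r u = (\<chi> j. \<Sum>i\<in>UNIV. r $ i $ j * u $ i)"

definition symmetric_tensor :: "'k ^ 'n ^ 'n \<Rightarrow> bool" where
  "symmetric_tensor r \<longleftrightarrow> (\<forall>i j. r $ i $ j = r $ j $ i)"

definition nondegenerate :: "'k::comm_ring_1 ^ 'n ^ 'n \<Rightarrow> bool" where
  "nondegenerate r \<longleftrightarrow> bij (rtilde r)"

definition formB :: "'k::comm_ring_1 ^ 'n ^ 'n \<Rightarrow> 'k ^ 'n \<Rightarrow> 'k ^ 'n \<Rightarrow> 'k" where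
  "formB r x y = pairing (inv (rtilde r) x) y"

definition basisv :: "'n \<Rightarrow> 'k::comm_ring_1 ^ 'n" where
  "basisv i = axis i 1"

definition tensor3 :: "'k::comm_ring_1 ^ 'n \<Rightarrow> 'k ^ 'n \<Rightarrow> 'k ^ 'n \<Rightarrow> 'n \<Rightarrow> 'n \<Rightarrow> 'n \<Rightarrow> 'k" where
  "tensor3 u v w = (\<lambda>p q s. u $ p * v $ q * w $ s)"

definition PLYBE_P ::
  "('k::comm_ring_1 ^ 'n \<Rightarrow> 'k ^ 'n \<Rightarrow> 'k ^ 'n) \<Rightarrow> 'k ^ 'n ^ 'n \<Rightarrow> 'n \<Rightarrow> 'n \<Rightarrow> 'n \<Rightarrow> 'k" where
  "PLYBE_P cc r = (\<lambda>p q s. \<Sum>i\<in>UNIV. \<Sum>j\<in>UNIV. \<Sum>k\<in>UNIV. \<Sum>l\<in>UNIV.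
      r $ i $ j * r $ k $ l *
       (tensor3 (basisv i) (basisv k) (cc (basisv j) (basisv l)) p q s
        - tensor3 (basisv i) (cc (basisv j) (basisv k)) (basisv l) p q s
        + tensor3 (bsq cc (basisv i) (basisv k)) (basisv l) (basisv j) p q s))"

definition PLYBE_L ::
  "('k::comm_ring_1 ^ 'n \<Rightarrow> 'k ^ 'n \<Rightarrow> 'k ^ 'n) \<Rightarrow> 'k ^ 'n ^ 'n \<Rightarrow> 'n \<Rightarrow> 'n \<Rightarrow> 'n \<Rightarrow> 'k" where
  "PLYBE_L br r = (\<lambda>p q s. \<Sum>i\<in>UNIV. \<Sum>j\<in>UNIV. \<Sum>k\<in>UNIV. \<Sum>l\<in>UNIV.
      r $ i $ j * r $ k $ l *
       (tensor3 (basisv i) (basisv k) (br (basisv j) (basisv l)) p q s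
        + tensor3 (basisv i) (br (basisv j) (basisv k)) (basisv l) p q s
        - tensor3 (wsq br (basisv i) (basisv k)) (basisv j) (basisv l) p q s))"

definition PLYBE_solution ::
  "('k::comm_ring_1 ^ 'n \<Rightarrow> 'k ^ 'n \<Rightarrow> 'k ^ 'n) \<Rightarrow> ('k ^ 'n \<Rightarrow> 'k ^ 'n \<Rightarrow> 'k ^ 'n) \<Rightarrow> 'k ^ 'n ^ 'n \<Rightarrow> bool" where
  "PLYBE_solution cc br r \<longleftrightarrow> PLYBE_P cc r = (\<lambda>p q s. 0) \<and> PLYBE_L br r = (\<lambda>p q s. 0)"

end

(*
  Contracting the 3-tensor P(r) with covectors u, v, w gives
    <w, T u o T v> - <v, T u o T w> + <u, T w \<blacksquare> T v>,   where T = r~,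
  and L(r) contracts analogously; symmetry of r is what lets all three index
  patterns in which r (x) r meets the product be written through T itself.
  As <u, x> = B(T u, x) and B is symmetric, these contractions are the defects of
  the two identities for B at (T u, T v, T w).  A 3-tensor vanishes iff all its
  contractions do, and T is onto.
*)
theory Submission
  imports Defs
begin

lemma bilinear_op_zero_left: "bilinear_op m \<Longrightarrow> m 0 y = 0"
  unfolding bilinear_op_def by (metis add_cancel_right_right)

lemma bilinear_op_zero_right: "bilinear_op m \<Longrightarrow> m x 0 = 0"
  unfolding bilinear_op_def by (metis add_cancel_right_right)

lemma bilinear_op_sum_left:
  assumes "bilinear_op m"
  shows "m (sum f S) y = (\<Sum>j\<in>S. m (f j) y)"
  using assms by (induction S rule: infinite_finite_induct)
    (simp_all add: bilinear_op_zero_left bilinear_op_def)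

lemma bilinear_op_sum_right:
  assumes "bilinear_op m"
  shows "m x (sum f S) = (\<Sum>j\<in>S. m x (f j))"
  using assms by (induction S rule: infinite_finite_induct)
    (simp_all add: bilinear_op_zero_right bilinear_op_def)

lemma bilinear_op_bsq: "bilinear_op m \<Longrightarrow> bilinear_op (bsq m)"
  unfolding bilinear_op_def bsq_def by (simp add: algebra_simps)

lemma bilinear_op_wsq: "bilinear_op m \<Longrightarrow> bilinear_op (wsq m)"
  unfolding bilinear_op_def wsq_def by (simp add: algebra_simps)

lemma bilinear_op_basis_expansion:
  assumes "bilinear_op m"
  shows "m x y = (\<Sum>j\<in>UNIV. \<Sum>l\<in>UNIV. (x $ j * y $ l) *s m (basisv j) (basisv l))"
proof -
  have "m x y = m (\<Sum>j\<in>UNIV. x $ j *s basisv j) (\<Sum>l\<in>UNIV. y $ l *s basisv l)"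
    unfolding basisv_def basis_expansion ..
  also have "\<dots> = (\<Sum>j\<in>UNIV. \<Sum>l\<in>UNIV. (x $ j * y $ l) *s m (basisv j) (basisv l))"
    using assms unfolding bilinear_op_sum_left[OF assms] bilinear_op_sum_right[OF assms]
    by (subst sum.swap) (simp add: bilinear_op_def mult.commute)
  finally show ?thesis .
qed

lemma basisv_nth: "basisv i $ j = (if j = i then 1 else 0)"
  unfolding basisv_def axis_def by simp

lemma pairing_basisv: "pairing u (basisv i) = u $ i"
  unfolding pairing_def basisv_nth by (simp add: if_distrib cong: if_cong)

lemma pairing_minus: "pairing u (- x) = - pairing u x"
  unfolding pairing_def by (simp add: sum_negf)

lemma pairing_scale: "pairing u (c *s x) = c * pairing u x"
  unfolding pairing_def by (simp add: sum_distrib_left mult_ac)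

lemma pairing_sum: "pairing u (sum f S) = (\<Sum>j\<in>S. pairing u (f j))"
  unfolding pairing_def by (simp add: sum_distrib_left sum.swap[of _ S])

lemma pairing_bilinear_op_basis_expansion:
  assumes "bilinear_op m"
  shows "pairing w (m x y) = (\<Sum>j\<in>UNIV. \<Sum>l\<in>UNIV. x $ j * y $ l * pairing w (m (basisv j) (basisv l)))"
  by (subst bilinear_op_basis_expansion[OF assms]) (simp add: pairing_sum pairing_scale)

lemma rtilde_nth: "rtilde r u $ j = (\<Sum>i\<in>UNIV. r $ i $ j * u $ i)"
  unfolding rtilde_def by simp

lemma sum_swap_inner:
  "(\<Sum>a\<in>A. \<Sum>b\<in>B. \<Sum>c\<in>C. \<Sum>d\<in>D. f a b c d) = (\<Sum>a\<in>A. \<Sum>b\<in>B. \<Sum>d\<in>D. \<Sum>c\<in>C. f a b c d)"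
  by (intro sum.cong refl sum.swap)

lemma sum_product_sums_reorder:
  fixes W :: "'j \<Rightarrow> 'l \<Rightarrow> 'a::comm_semiring_0"
  shows "(\<Sum>j\<in>J. \<Sum>l\<in>L. (\<Sum>i\<in>I. a i j) * (\<Sum>k\<in>K. b k l) * W j l)
    = (\<Sum>i\<in>I. \<Sum>j\<in>J. \<Sum>k\<in>K. \<Sum>l\<in>L. a i j * b k l * W j l)"
proof -
  have "(\<Sum>j\<in>J. \<Sum>l\<in>L. (\<Sum>i\<in>I. a i j) * (\<Sum>k\<in>K. b k l) * W j l)
      = (\<Sum>j\<in>J. \<Sum>l\<in>L. \<Sum>k\<in>K. \<Sum>i\<in>I. a i j * b k l * W j l)"
    by (simp add: sum_distrib_left sum_distrib_right)
  also have "\<dots> = (\<Sum>j\<in>J. \<Sum>l\<in>L. \<Sum>i\<in>I. \<Sum>k\<in>K. a i j * b k l * W j l)"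
    by (rule sum_swap_inner)
  also have "\<dots> = (\<Sum>j\<in>J. \<Sum>i\<in>I. \<Sum>l\<in>L. \<Sum>k\<in>K. a i j * b k l * W j l)"
    by (intro sum.cong refl sum.swap)
  also have "\<dots> = (\<Sum>j\<in>J. \<Sum>i\<in>I. \<Sum>k\<in>K. \<Sum>l\<in>L. a i j * b k l * W j l)"
    by (rule sum_swap_inner)
  also have "\<dots> = (\<Sum>i\<in>I. \<Sum>j\<in>J. \<Sum>k\<in>K. \<Sum>l\<in>L. a i j * b k l * W j l)"
    by (rule sum.swap)
  finally show ?thesis .
qed

lemma pairing_bilinear_op_rtilde:
  assumes "bilinear_op m"
  shows "pairing w (m (rtilde r u) (rtilde r v)) = (\<Sum>i\<in>UNIV. \<Sum>j\<in>UNIV. \<Sum>k\<in>UNIV. \<Sum>l\<in>UNIV.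
     r $ i $ j * r $ k $ l * (u $ i * v $ k * pairing w (m (basisv j) (basisv l))))"
proof -
  have "pairing w (m (rtilde r u) (rtilde r v)) = (\<Sum>j\<in>UNIV. \<Sum>l\<in>UNIV.
      (\<Sum>i\<in>UNIV. r $ i $ j * u $ i) * (\<Sum>k\<in>UNIV. r $ k $ l * v $ k) * pairing w (m (basisv j) (basisv l)))"
    using pairing_bilinear_op_basis_expansion[OF assms, of w "rtilde r u" "rtilde r v"]
    by (simp only: rtilde_nth)
  then show ?thesis
    by (simp only: sum_product_sums_reorder) (simp add: mult_ac)
qed

lemma pairing_bilinear_op_rtilde_transposed:
  assumes "bilinear_op m" and "symmetric_tensor r"
  shows "pairing w (m (rtilde r u) (rtilde r v)) = (\<Sum>i\<in>UNIV. \<Sum>j\<in>UNIV. \<Sum>k\<in>UNIV. \<Sum>l\<in>UNIV.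
     r $ i $ j * r $ k $ l * (u $ j * v $ l * pairing w (m (basisv i) (basisv k))))"
proof -
  have "pairing w (m (rtilde r u) (rtilde r v)) = (\<Sum>j\<in>UNIV. \<Sum>i\<in>UNIV. \<Sum>l\<in>UNIV. \<Sum>k\<in>UNIV.
     r $ j $ i * r $ l $ k * (u $ j * v $ l * pairing w (m (basisv i) (basisv k))))"
    by (rule pairing_bilinear_op_rtilde[OF assms(1)])
  also have "\<dots> = (\<Sum>i\<in>UNIV. \<Sum>j\<in>UNIV. \<Sum>k\<in>UNIV. \<Sum>l\<in>UNIV.
     r $ j $ i * r $ l $ k * (u $ j * v $ l * pairing w (m (basisv i) (basisv k))))"
    by (rule trans[OF sum.swap sum_swap_inner])
  finally show ?thesis
    using assms(2) unfolding symmetric_tensor_def by simp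
qed

lemma pairing_bilinear_op_rtilde_mixed:
  assumes "bilinear_op m" and "symmetric_tensor r"
  shows "pairing v (m (rtilde r u) (rtilde r w)) = (\<Sum>i\<in>UNIV. \<Sum>j\<in>UNIV. \<Sum>k\<in>UNIV. \<Sum>l\<in>UNIV.
     r $ i $ j * r $ k $ l * (u $ i * pairing v (m (basisv j) (basisv k)) * w $ l))"
proof -
  have "pairing v (m (rtilde r u) (rtilde r w)) = (\<Sum>i\<in>UNIV. \<Sum>j\<in>UNIV. \<Sum>l\<in>UNIV. \<Sum>k\<in>UNIV.
     r $ i $ j * r $ l $ k * (u $ i * w $ l * pairing v (m (basisv j) (basisv k))))"
    by (rule pairing_bilinear_op_rtilde[OF assms(1)])
  also have "\<dots> = (\<Sum>i\<in>UNIV. \<Sum>j\<in>UNIV. \<Sum>k\<in>UNIV. \<Sum>l\<in>UNIV.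
     r $ i $ j * r $ l $ k * (u $ i * w $ l * pairing v (m (basisv j) (basisv k))))"
    by (rule sum_swap_inner)
  finally show ?thesis
    using assms(2) unfolding symmetric_tensor_def by (simp add: mult_ac)
qed

definition contract3 ::
  "('n::finite \<Rightarrow> 'n \<Rightarrow> 'n \<Rightarrow> 'k::comm_ring_1) \<Rightarrow> 'k ^ 'n \<Rightarrow> 'k ^ 'n \<Rightarrow> 'k ^ 'n \<Rightarrow> 'k" where
  "contract3 F u v w = (\<Sum>p\<in>UNIV. u $ p * (\<Sum>q\<in>UNIV. v $ q * (\<Sum>s\<in>UNIV. w $ s * F p q s)))"

lemma contract3_basisv: "contract3 F (basisv p) (basisv q) (basisv s) = F p q s"
  unfolding contract3_def basisv_nth by (simp add: if_distrib[of "\<lambda>x. x * _"] cong: if_cong)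

lemma tensor3_eq_0_iff_contract3: "F = (\<lambda>p q s. 0) \<longleftrightarrow> (\<forall>u v w. contract3 F u v w = 0)"
proof
  assume "\<forall>u v w. contract3 F u v w = 0"
  then show "F = (\<lambda>p q s. 0)"
    by (metis contract3_basisv)
qed (simp add: contract3_def)

lemma contract3_tensor3: "contract3 (tensor3 a b c) u v w = pairing u a * pairing v b * pairing w c"
proof -
  have "contract3 (tensor3 a b c) u v w
      = (\<Sum>p\<in>UNIV. u $ p * a $ p * (\<Sum>q\<in>UNIV. v $ q * b $ q * (\<Sum>s\<in>UNIV. w $ s * c $ s)))"
    unfolding contract3_def tensor3_def by (simp add: sum_distrib_left mult_ac)
  also have "\<dots> = pairing u a * (pairing v b * pairing w c)"
    unfolding pairing_def by (simp only: sum_distrib_right)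
  finally show ?thesis
    by (simp only: mult.assoc)
qed

lemma contract3_add: "contract3 (\<lambda>p q s. F p q s + G p q s) u v w = contract3 F u v w + contract3 G u v w"
  unfolding contract3_def by (simp add: distrib_left sum.distrib)

lemma contract3_diff: "contract3 (\<lambda>p q s. F p q s - G p q s) u v w = contract3 F u v w - contract3 G u v w"
  unfolding contract3_def by (simp add: right_diff_distrib sum_subtractf)

lemma contract3_mult: "contract3 (\<lambda>p q s. c * F p q s) u v w = c * contract3 F u v w"
  unfolding contract3_def by (simp add: sum_distrib_left mult.left_commute)

lemma contract3_sum: "contract3 (\<lambda>p q s. \<Sum>i\<in>S. F i p q s) u v w = (\<Sum>i\<in>S. contract3 (F i) u v w)"
proof (induction S rule: infinite_finite_induct)
  case (insert i S)
  then show ?case by (simp add: contract3_add)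
qed (simp_all add: contract3_def)

lemma contract3_PLYBE_P:
  assumes "bilinear_op cc" and "symmetric_tensor r"
  shows "contract3 (PLYBE_P cc r) u v w =
    pairing w (cc (rtilde r u) (rtilde r v)) - pairing v (cc (rtilde r u) (rtilde r w))
    + pairing u (bsq cc (rtilde r w) (rtilde r v))" (is "_ = ?rhs")
proof -
  have "contract3 (PLYBE_P cc r) u v w =
      (\<Sum>i\<in>UNIV. \<Sum>j\<in>UNIV. \<Sum>k\<in>UNIV. \<Sum>l\<in>UNIV.
        r $ i $ j * r $ k $ l * (u $ i * v $ k * pairing w (cc (basisv j) (basisv l))))
    - (\<Sum>i\<in>UNIV. \<Sum>j\<in>UNIV. \<Sum>k\<in>UNIV. \<Sum>l\<in>UNIV.
        r $ i $ j * r $ k $ l * (u $ i * pairing v (cc (basisv j) (basisv k)) * w $ l))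
    + (\<Sum>i\<in>UNIV. \<Sum>j\<in>UNIV. \<Sum>k\<in>UNIV. \<Sum>l\<in>UNIV.
        r $ i $ j * r $ k $ l * (pairing u (bsq cc (basisv i) (basisv k)) * v $ l * w $ j))"
    unfolding PLYBE_P_def
    by (simp add: contract3_sum contract3_mult contract3_add contract3_diff contract3_tensor3
        pairing_basisv distrib_left right_diff_distrib sum.distrib sum_subtractf)
  also have "\<dots> = ?rhs"
    by (simp only: mult_ac pairing_bilinear_op_rtilde[OF assms(1), where w = w and u = u and v = v]
        pairing_bilinear_op_rtilde_mixed[OF assms, where v = v and u = u and w = w]
        pairing_bilinear_op_rtilde_transposed[OF bilinear_op_bsq[OF assms(1)] assms(2),
          where w = u and u = w and v = v])
  finally show ?thesis .
qed

lemma contract3_PLYBE_L: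
  assumes "bilinear_op br" and "symmetric_tensor r"
  shows "contract3 (PLYBE_L br r) u v w =
    pairing w (br (rtilde r u) (rtilde r v)) + pairing v (br (rtilde r u) (rtilde r w))
    - pairing u (wsq br (rtilde r v) (rtilde r w))" (is "_ = ?rhs")
proof -
  have "contract3 (PLYBE_L br r) u v w =
      (\<Sum>i\<in>UNIV. \<Sum>j\<in>UNIV. \<Sum>k\<in>UNIV. \<Sum>l\<in>UNIV.
        r $ i $ j * r $ k $ l * (u $ i * v $ k * pairing w (br (basisv j) (basisv l))))
    + (\<Sum>i\<in>UNIV. \<Sum>j\<in>UNIV. \<Sum>k\<in>UNIV. \<Sum>l\<in>UNIV.
        r $ i $ j * r $ k $ l * (u $ i * pairing v (br (basisv j) (basisv k)) * w $ l))
    - (\<Sum>i\<in>UNIV. \<Sum>j\<in>UNIV. \<Sum>k\<in>UNIV. \<Sum>l\<in>UNIV.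
        r $ i $ j * r $ k $ l * (pairing u (wsq br (basisv i) (basisv k)) * v $ j * w $ l))"
    unfolding PLYBE_L_def
    by (simp add: contract3_sum contract3_mult contract3_add contract3_diff contract3_tensor3
        pairing_basisv distrib_left right_diff_distrib sum.distrib sum_subtractf)
  also have "\<dots> = ?rhs"
    by (simp only: mult_ac pairing_bilinear_op_rtilde[OF assms(1), where w = w and u = u and v = v]
        pairing_bilinear_op_rtilde_mixed[OF assms, where v = v and u = u and w = w]
        pairing_bilinear_op_rtilde_transposed[OF bilinear_op_wsq[OF assms(1)] assms(2),
          where w = u and u = v and v = w])
  finally show ?thesis .
qed

lemma pairing_rtilde_commute:
  assumes "symmetric_tensor r"
  shows "pairing u (rtilde r v) = pairing v (rtilde r u)"
proof -
  have "pairing u (rtilde r v) = (\<Sum>j\<in>UNIV. \<Sum>i\<in>UNIV. u $ j * (r $ i $ j * v $ i))"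
    unfolding pairing_def rtilde_nth by (simp add: sum_distrib_left)
  also have "\<dots> = (\<Sum>i\<in>UNIV. \<Sum>j\<in>UNIV. u $ j * (r $ i $ j * v $ i))"
    by (rule sum.swap)
  also have "\<dots> = pairing v (rtilde r u)"
    using assms unfolding pairing_def rtilde_nth symmetric_tensor_def
    by (simp add: sum_distrib_left mult_ac)
  finally show ?thesis .
qed

lemma formB_rtilde_left:
  assumes "nondegenerate r"
  shows "formB r (rtilde r u) x = pairing u x"
  using assms unfolding formB_def nondegenerate_def by (simp add: bij_is_inj)

lemma formB_commute:
  assumes "nondegenerate r" and "symmetric_tensor r"
  shows "formB r x y = formB r y x"
proof -
  obtain u v where "x = rtilde r u" and "y = rtilde r v"
    using assms(1) unfolding nondegenerate_def by (metis bij_is_surj surjD)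
  then show ?thesis
    by (simp add: formB_rtilde_left[OF assms(1)] pairing_rtilde_commute[OF assms(2)])
qed

lemma formB_uminus_right: "formB r x (- y) = - formB r x y"
  unfolding formB_def by (rule pairing_minus)

lemma bsq_swap: "bsq m y x = - bsq m x y"
  unfolding bsq_def by simp

lemma surj_forall3_iff:
  assumes "surj f"
  shows "(\<forall>u v w. P (f u) (f v) (f w)) \<longleftrightarrow> (\<forall>x y z. P x y z)"
  using assms by (metis surjD)

lemma PLYBE_P_eq_0_iff_formB:
  assumes "bilinear_op cc" and "symmetric_tensor r" and "nondegenerate r"
  shows "PLYBE_P cc r = (\<lambda>p q s. 0) \<longleftrightarrow>
    (\<forall>x y z. formB r (cc x y) z = formB r y (cc x z) + formB r x (bsq cc y z))"
proof -
  let ?T = "rtilde r"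
  define D where "D x y z = formB r (cc x y) z - formB r y (cc x z) - formB r x (bsq cc y z)" for x y z
  have "contract3 (PLYBE_P cc r) u v w = D (?T u) (?T v) (?T w)" for u v w
    unfolding contract3_PLYBE_P[OF assms(1,2)] formB_rtilde_left[OF assms(3), symmetric] D_def
    by (simp add: formB_commute[OF assms(3,2), of "?T w"] bsq_swap[of cc "?T w"] formB_uminus_right)
  then have "PLYBE_P cc r = (\<lambda>p q s. 0) \<longleftrightarrow> (\<forall>u v w. D (?T u) (?T v) (?T w) = 0)"
    by (simp add: tensor3_eq_0_iff_contract3)
  also have "\<dots> \<longleftrightarrow> (\<forall>x y z. D x y z = 0)"
    using assms(3) unfolding nondegenerate_def by (intro surj_forall3_iff bij_is_surj)
  finally show ?thesis
    by (simp add: D_def algebra_simps)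
qed

lemma PLYBE_L_eq_0_iff_formB:
  assumes "bilinear_op br" and "symmetric_tensor r" and "nondegenerate r"
  shows "PLYBE_L br r = (\<lambda>p q s. 0) \<longleftrightarrow>
    (\<forall>x y z. formB r (br x y) z = - formB r y (br x z) + formB r x (wsq br y z))"
proof -
  let ?T = "rtilde r"
  define D where "D x y z = formB r (br x y) z + formB r y (br x z) - formB r x (wsq br y z)" for x y z
  have "contract3 (PLYBE_L br r) u v w = D (?T u) (?T v) (?T w)" for u v w
    unfolding contract3_PLYBE_L[OF assms(1,2)] formB_rtilde_left[OF assms(3), symmetric] D_def
    by (simp add: formB_commute[OF assms(3,2), of "?T w"])
  then have "PLYBE_L br r = (\<lambda>p q s. 0) \<longleftrightarrow> (\<forall>u v w. D (?T u) (?T v) (?T w) = 0)"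
    by (simp add: tensor3_eq_0_iff_contract3)
  also have "\<dots> \<longleftrightarrow> (\<forall>x y z. D x y z = 0)"
    using assms(3) unfolding nondegenerate_def by (intro surj_forall3_iff bij_is_surj)
  finally show ?thesis
    by (simp add: D_def algebra_simps)
qed

theorem proposition3p22:
  fixes cc br :: "'k::field_char_0 ^ 'n \<Rightarrow> 'k ^ 'n \<Rightarrow> 'k ^ 'n"
    and r :: "'k ^ 'n ^ 'n"
  assumes "dual_pre_Poisson cc br"
    and "symmetric_tensor r"
    and "nondegenerate r"
  shows "PLYBE_solution cc br r \<longleftrightarrow>
    (\<forall>x y z. formB r (cc x y) z = formB r y (cc x z) + formB r x (bsq cc y z)) \<and>
    (\<forall>x y z. formB r (br x y) z = - formB r y (br x z) + formB r x (wsq br y z))"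
proof -
  have "bilinear_op cc" and "bilinear_op br"
    using assms(1) unfolding dual_pre_Poisson_def by simp_all
  then show ?thesis
    unfolding PLYBE_solution_def
    using PLYBE_P_eq_0_iff_formB PLYBE_L_eq_0_iff_formB assms(2,3) by blast
qed

end
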